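(* For every real $x\notin\mathbb Z$, $$\csc^2(\pi x)+|\cot(\pi x)\csc(\pi x)|\leqslant \tfrac14\|x\|^{-2}$$ and $$|\cot(\pi x)\csc(\pi x)|\leqslant \pi^{-2}\|x\|^{-2}.$$
   Context: For real $\theta$, $\|\theta\|=\min_{n\in\mathbb Z}|\theta-n|$ denotes the distance from $\theta$ to the nearest integer. *)

theory Defs
  imports Complex_Main
begin

definition csc :: "real \<Rightarrow> real" where
  "csc x = 1 / sin x"

definition dist_int :: "real \<Rightarrow> real" where
  "dist_int x = Inf {\<bar>x - of_int n\<bar> | n :: int. True}"

end

theory Submission imports Defs begin

text \<open>Put \<open>t = \<pi>\<parallel>x\<parallel> \<in> (0, \<pi>/2]\<close>. Since \<open>\<bar>sin\<bar>\<close> and \<open>\<bar>cos\<bar>\<close> are \<open>\<pi>\<close>-periodic and even,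
  \<open>\<bar>sin (\<pi>x)\<bar> = sin t\<close> and \<open>\<bar>cos (\<pi>x)\<bar> = cos t\<close>. The first inequality then reads
  \<open>(1 + cos t) / sin\<^sup>2 t = 1 / (2 sin\<^sup>2 (t/2)) \<le> \<pi>\<^sup>2 / (4t\<^sup>2)\<close>, i.e. \<open>sin s \<ge> (2\<surd>2/\<pi>) s\<close> for
  \<open>s = t/2 \<in> (0, \<pi>/4]\<close>, which holds because \<open>sin s / s\<close> is decreasing. The second reads
  \<open>t\<^sup>2 cos t \<le> sin\<^sup>2 t\<close>, which follows from the Taylor bounds \<open>sin t \<ge> t - t\<^sup>3/6\<close> and
  \<open>cos t \<le> 1 - t\<^sup>2/2 + t\<^sup>4/24\<close>.\<close>

lemma sin_ge_cubic_taylor: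
  assumes "0 < x" "x \<le> pi"
  shows "x - x^3/6 \<le> sin x"
proof -
  obtain t where t: "0 < t" "t < x"
    "sin x = (\<Sum>m<4. sin_coeff m * x ^ m) + (sin (t + 1/2 * real 4 * pi) / fact 4) * x ^ 4"
    using Maclaurin_sin_expansion3[of 4 x] assms by auto
  have "{..<4::nat} = {0,1,2,3}" by auto
  then have poly: "(\<Sum>m<4. sin_coeff m * x ^ m) = x - x^3/6"
    by (simp add: sin_coeff_def fact_numeral)
  have "sin (t + 1/2 * real 4 * pi) = sin t" by (simp add: sin_add)
  moreover have "sin t \<ge> 0" using t assms by (intro sin_ge_zero) auto
  ultimately show ?thesis using t(3) poly by simp
qed

lemma cos_le_quartic_taylor:
  assumes "0 < x" "x \<le> pi/2"
  shows "cos x \<le> 1 - x^2/2 + x^4/24"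
proof -
  obtain t where t: "0 < t" "t < x"
    "cos x = (\<Sum>m<6. cos_coeff m * x ^ m) + (cos (t + 1/2 * real 6 * pi) / fact 6) * x ^ 6"
    using Maclaurin_cos_expansion2[of x 6] assms by auto
  have "{..<6::nat} = {0,1,2,3,4,5}" by auto
  then have poly: "(\<Sum>m<6. cos_coeff m * x ^ m) = 1 - x^2/2 + x^4/24"
    by (simp add: cos_coeff_def fact_numeral)
  have "cos (t + 1/2 * real 6 * pi) = - cos t" by (simp add: cos_add)
  moreover have "cos t \<ge> 0" using t assms by (intro cos_ge_zero) auto
  ultimately show ?thesis using t(3) poly by simp
qed

lemma mult_cos_le_sin:
  assumes "0 \<le> x" "x \<le> pi"
  shows "x * cos x \<le> sin x"
proof -
  let ?f = "\<lambda>x. sin x - x * cos x"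
  have "?f 0 \<le> ?f x"
  proof (rule DERIV_nonneg_imp_nondecreasing[OF assms(1)])
    fix u assume "0 \<le> u" "u \<le> x"
    then show "\<exists>y. (?f has_real_derivative y) (at u) \<and> y \<ge> 0"
      using assms
      by (intro exI[of _ "u * sin u"]) (auto intro!: derivative_eq_intros mult_nonneg_nonneg sin_ge_zero)
  qed
  then show ?thesis by simp
qed

lemma sin_div_antimono:
  assumes "0 < u" "u \<le> v" "v \<le> pi"
  shows "sin v / v \<le> sin u / u"
proof (rule DERIV_nonpos_imp_nonincreasing[OF assms(2)])
  fix w assume w: "u \<le> w" "w \<le> v"
  with assms have "0 < w" "w \<le> pi" by linarith+
  then have "(w * cos w - sin w) / w^2 \<le> 0"
    using mult_cos_le_sin[of w] by (simp add: divide_nonpos_nonneg)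
  moreover have "((\<lambda>w. sin w / w) has_real_derivative (w * cos w - sin w) / w^2) (at w)"
    using \<open>0 < w\<close> by (auto intro!: derivative_eq_intros simp: field_simps power2_eq_square)
  ultimately show "\<exists>y. ((\<lambda>w. sin w / w) has_real_derivative y) (at w) \<and> y \<le> 0" by blast
qed

lemma sq_mult_cos_le_sin_sq:
  assumes "0 < t" "t \<le> pi/2"
  shows "t^2 * cos t \<le> (sin t)^2"
proof -
  have "t^2 \<le> 2^2" using assms pi_less_4 by (intro power_mono) auto
  then have t_sq: "t^2 \<le> 4" by simp
  have "t - t^3/6 = t * (1 - t^2/6)"
    by (simp add: algebra_simps power2_eq_square power3_eq_cube)
  then have cubic_nonneg: "0 \<le> t - t^3/6" using t_sq assms by simp
  have "t^2 * cos t \<le> t^2 * (1 - t^2/2 + t^4/24)"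
    using cos_le_quartic_taylor[OF assms] by (simp add: mult_left_mono)
  also have "\<dots> = (t - t^3/6)^2 - t^4 * (12 - t^2) / 72"
    by (simp add: field_simps power2_eq_square power3_eq_cube power4_eq_xxxx)
  also have "\<dots> \<le> (t - t^3/6)^2" using t_sq by simp
  also have "\<dots> \<le> (sin t)^2"
    using sin_ge_cubic_taylor[of t] assms cubic_nonneg by (simp add: power_mono)
  finally show ?thesis .
qed

lemma one_plus_cos_div_sin_sq_le:
  assumes "0 < t" "t \<le> pi/2"
  shows "(1 + cos t) / (sin t)^2 \<le> pi^2 / (4 * t^2)"
proof -
  define s where "s = t/2"
  have s: "0 < s" "s \<le> pi/4" using assms by (auto simp: s_def)
  have "sin (pi/4) / (pi/4) \<le> sin s / s"
    using sin_div_antimono[of s "pi/4"] s by simp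
  then have "2 * sqrt 2 * s \<le> pi * sin s"
    using s pi_gt_zero by (simp add: sin_45 field_simps)
  then have "(2 * sqrt 2 * s)^2 \<le> (pi * sin s)^2" using s by (intro power_mono) auto
  then have jordan: "8 * s^2 \<le> pi^2 * (sin s)^2" by (simp add: power_mult_distrib)
  have sin_s: "sin s > 0" using s pi_gt_zero by (intro sin_gt_zero) auto
  have half_angle: "1 - cos t = 2 * (sin s)^2" using cos_double_sin[of s] by (simp add: s_def)
  have "1 + cos t > 0" using assms by (simp add: add_pos_nonneg cos_ge_zero)
  moreover have "(sin t)^2 = (1 - cos t) * (1 + cos t)"
    by (simp add: sin_squared_eq algebra_simps power2_eq_square)
  ultimately have "(1 + cos t) / (sin t)^2 = 1 / (2 * (sin s)^2)"
    by (simp add: half_angle)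
  also have "\<dots> \<le> pi^2 / (4 * t^2)"
    using jordan s sin_s by (simp add: s_def field_simps power2_eq_square)
  finally show ?thesis .
qed

lemma dist_int_eq_min_frac: "dist_int x = min (frac x) (1 - frac x)"
  unfolding dist_int_def
proof (rule cInf_eq_minimum)
  show "min (frac x) (1 - frac x) \<in> {\<bar>x - of_int n\<bar> | n :: int. True}"
  proof (cases "frac x \<le> 1 - frac x")
    case True
    then show ?thesis by (intro CollectI exI[of _ "\<lfloor>x\<rfloor>"]) (auto simp: frac_def)
  next
    case False
    then show ?thesis using frac_lt_1[of x]
      by (intro CollectI exI[of _ "\<lfloor>x\<rfloor> + 1"]) (auto simp: frac_def)
  qed
next
  fix z assume "z \<in> {\<bar>x - of_int n\<bar> | n :: int. True}"
  then obtain n :: int where z: "z = \<bar>x - of_int n\<bar>" by auto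
  show "min (frac x) (1 - frac x) \<le> z"
  proof (cases "n \<le> \<lfloor>x\<rfloor>")
    case True
    then have "real_of_int n \<le> of_int \<lfloor>x\<rfloor>" by linarith
    then have "frac x \<le> z" unfolding z frac_def by linarith
    then show ?thesis by (rule min.coboundedI1)
  next
    case False
    then have "of_int \<lfloor>x\<rfloor> + 1 \<le> real_of_int n" by linarith
    then have "1 - frac x \<le> z" unfolding z frac_def by linarith
    then show ?thesis by (rule min.coboundedI2)
  qed
qed

lemma dist_int_le_half: "dist_int x \<le> 1/2"
  by (simp add: dist_int_eq_min_frac min_def)

lemma dist_int_pos_iff: "0 < dist_int x \<longleftrightarrow> x \<notin> \<int>"
  by (simp add: dist_int_eq_min_frac frac_lt_1)

lemma abs_sin_cos_pi_eq_dist_int: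
  "\<bar>sin (pi * x)\<bar> = sin (pi * dist_int x) \<and> \<bar>cos (pi * x)\<bar> = cos (pi * dist_int x)"
proof -
  define d where "d = dist_int x"
  have "0 \<le> d" by (simp add: d_def dist_int_eq_min_frac less_imp_le[OF frac_lt_1])
  moreover have "d \<le> 1/2" using dist_int_le_half by (simp add: d_def)
  ultimately have "0 \<le> pi * d" "pi * d \<le> pi/2" by simp_all
  then have nonneg: "sin (pi * d) \<ge> 0" "cos (pi * d) \<ge> 0"
    by (intro sin_ge_zero cos_ge_zero; use pi_gt_zero in linarith)+
  obtain n :: int where "pi * x = pi * d + pi * of_int n \<or> pi * x = - (pi * d) + pi * of_int n"
  proof (cases "frac x \<le> 1 - frac x")
    case True
    then have "x = d + of_int \<lfloor>x\<rfloor>" by (simp add: d_def dist_int_eq_min_frac frac_def)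
    then have "pi * x = pi * d + pi * of_int \<lfloor>x\<rfloor>" by (metis distrib_left)
    then show ?thesis using that by blast
  next
    case False
    then have "x = - d + of_int (\<lfloor>x\<rfloor> + 1)" by (simp add: d_def dist_int_eq_min_frac frac_def)
    then have "pi * x = - (pi * d) + pi * of_int (\<lfloor>x\<rfloor> + 1)"
      by (metis distrib_left mult_minus_right)
    then show ?thesis using that by blast
  qed
  then have "\<bar>sin (pi * x)\<bar> = \<bar>sin (pi * d)\<bar> \<and> \<bar>cos (pi * x)\<bar> = \<bar>cos (pi * d)\<bar>"
    by (auto simp: sin_add cos_add sin_diff cos_diff abs_mult)
  then show ?thesis using nonneg by (simp add: d_def)
qed

theorem lemma1:
  fixes x :: real
  assumes "x \<notin> \<int>"
  shows "(csc (pi * x))\<^sup>2 + \<bar>cot (pi * x) * csc (pi * x)\<bar> \<le> (1/4) * (dist_int x) powi (-2)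
     \<and> \<bar>cot (pi * x) * csc (pi * x)\<bar> \<le> pi powi (-2) * (dist_int x) powi (-2)"
proof -
  define t where "t = pi * dist_int x"
  have "0 < dist_int x" "dist_int x \<le> 1/2"
    using assms dist_int_pos_iff dist_int_le_half by auto
  then have t: "0 < t" "t \<le> pi/2" by (auto simp: t_def)
  have "(csc (pi * x))\<^sup>2 = 1 / (sin t)^2"
  proof -
    have "(csc (pi * x))\<^sup>2 = 1 / \<bar>sin (pi * x)\<bar>^2" by (simp add: csc_def power_divide)
    then show ?thesis using abs_sin_cos_pi_eq_dist_int[of x] by (simp add: t_def)
  qed
  moreover have "\<bar>cot (pi * x) * csc (pi * x)\<bar> = cos t / (sin t)^2"
    using abs_sin_cos_pi_eq_dist_int[of x]
    by (simp add: t_def cot_def csc_def abs_mult power2_eq_square)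
  moreover have "(dist_int x) powi (-2) = pi^2 / t^2" "pi powi (-2) = 1 / pi^2"
    using pi_gt_zero by (simp_all add: t_def power_int_minus power_mult_distrib field_simps)
  moreover have "cos t / (sin t)^2 \<le> 1 / t^2"
    using sq_mult_cos_le_sin_sq[OF t] t sin_gt_zero[of t] by (simp add: field_simps)
  ultimately show ?thesis
    using one_plus_cos_div_sin_sq_le[OF t] by (simp add: add_divide_distrib)
qed

end
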